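(* Let $\kappa$ be a cardinal. Let $(A_\alpha)_{\alpha\in\mathrm{Ord}}$ be cpo's and $f_{\alpha,\beta}\colon A_\alpha\to A_\beta$ ($\alpha\le\beta$) cpo maps with $f_{\beta,\gamma}\circ f_{\alpha,\beta}=f_{\alpha,\gamma}$ for all $\alpha\le\beta\le\gamma$ and $f_{\alpha,\alpha}=\mathrm{id}_{A_\alpha}$. Suppose that $A_0=\kappa\cdot 3$ is the coproduct in $\mathbf{CPO}$ of $\kappa$ copies of the chain $3$; that for every ordinal $\alpha$, $f_{\alpha,\alpha+1}\colon A_\alpha\to A_{\alpha+1}$ is a coequalizer in $\mathbf{CPO}$ of some pair of cpo maps $2\to A_\alpha$; and that for every limit ordinal $\alpha$, $A_\alpha=\operatorname{colim}_{\beta<\alpha}A_\beta$ in $\mathbf{CPO}$ with colimit injections $f_{\beta,\alpha}$. Then for every ordinal $\alpha$: (i) if $\kappa$ is infinite, $|A_\alpha|\le 2^\kappa$; (ii) if $\kappa$ is finite, $|A_\alpha|\le 2\kappa+1$.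
   Context: A cpo is a poset in which every chain, including the empty chain, has a join (so every cpo has a least element $0$). A cpo map is a map preserving joins of all chains. $\mathbf{CPO}$ is the category of cpo's and cpo maps; it is complete and cocomplete, and coproducts are disjoint unions with least elements identified. $2$ is the chain $0<1$ and $3$ is the chain $0<1<2$. *)

theory Defs
  imports Main
begin

text \<open>Posets and cpos are represented by a carrier set together with an order relation.
  Maps are HOL functions; only their values on the carrier matter.\<close>

definition is_po :: "'a set \<Rightarrow> ('a \<Rightarrow> 'a \<Rightarrow> bool) \<Rightarrow> bool" where
  "is_po S r \<longleftrightarrow> (\<forall>x\<in>S. r x x) \<and>
     (\<forall>x\<in>S. \<forall>y\<in>S. r x y \<and> r y x \<longrightarrow> x = y) \<and>
     (\<forall>x\<in>S. \<forall>y\<in>S. \<forall>z\<in>S. r x y \<and> r y z \<longrightarrow> r x z)"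

definition is_chain :: "'a set \<Rightarrow> ('a \<Rightarrow> 'a \<Rightarrow> bool) \<Rightarrow> 'a set \<Rightarrow> bool" where
  "is_chain S r C \<longleftrightarrow> C \<subseteq> S \<and> (\<forall>x\<in>C. \<forall>y\<in>C. r x y \<or> r y x)"

definition is_join :: "'a set \<Rightarrow> ('a \<Rightarrow> 'a \<Rightarrow> bool) \<Rightarrow> 'a set \<Rightarrow> 'a \<Rightarrow> bool" where
  "is_join S r C x \<longleftrightarrow> x \<in> S \<and> (\<forall>c\<in>C. r c x) \<and> (\<forall>y\<in>S. (\<forall>c\<in>C. r c y) \<longrightarrow> r x y)"

definition is_cpo :: "'a set \<Rightarrow> ('a \<Rightarrow> 'a \<Rightarrow> bool) \<Rightarrow> bool" where
  "is_cpo S r \<longleftrightarrow> is_po S r \<and> (\<forall>C. is_chain S r C \<longrightarrow> (\<exists>x. is_join S r C x))"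

definition cpo_map :: "'a set \<Rightarrow> ('a \<Rightarrow> 'a \<Rightarrow> bool) \<Rightarrow> 'b set \<Rightarrow> ('b \<Rightarrow> 'b \<Rightarrow> bool) \<Rightarrow> ('a \<Rightarrow> 'b) \<Rightarrow> bool" where
  "cpo_map S r T s f \<longleftrightarrow> f ` S \<subseteq> T \<and>
     (\<forall>C x. is_chain S r C \<longrightarrow> is_join S r C x \<longrightarrow> is_join T s (f ` C) (f x))"

abbreviation two_set :: "bool set" where "two_set \<equiv> UNIV"
abbreviation two_le :: "bool \<Rightarrow> bool \<Rightarrow> bool" where "two_le \<equiv> (\<le>)"

text \<open>Coequalizer in CPO of g, h : 2 \<rightarrow> A, with universal property tested against all
  cpos whose carrier lives in type 'c.\<close>
definition is_coequalizer ::
  "'c itself \<Rightarrow> 'a set \<Rightarrow> ('a \<Rightarrow> 'a \<Rightarrow> bool) \<Rightarrow> (bool \<Rightarrow> 'a) \<Rightarrow> (bool \<Rightarrow> 'a) \<Rightarrow>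
   'a set \<Rightarrow> ('a \<Rightarrow> 'a \<Rightarrow> bool) \<Rightarrow> ('a \<Rightarrow> 'a) \<Rightarrow> bool" where
  "is_coequalizer (_::'c itself) A r g h Q q e \<longleftrightarrow>
     cpo_map A r Q q e \<and> (\<forall>x. e (g x) = e (h x)) \<and>
     (\<forall>(C::'c set) s k. is_cpo C s \<and> cpo_map A r C s k \<and> (\<forall>x. k (g x) = k (h x)) \<longrightarrow>
        (\<exists>u. cpo_map Q q C s u \<and> (\<forall>a\<in>A. u (e a) = k a) \<and>
             (\<forall>u'. cpo_map Q q C s u' \<and> (\<forall>a\<in>A. u' (e a) = k a) \<longrightarrow> (\<forall>y\<in>Q. u' y = u y))))"

text \<open>Colimit in CPO of the chain diagram (A \<beta>, f \<beta> \<gamma>) for \<beta> \<le> \<gamma> < \<alpha>, with cocone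
  (f \<beta> \<alpha>)_{\<beta><\<alpha>}; universal property tested against cpos with carrier in type 'c.\<close>
definition is_chain_colimit ::
  "'c itself \<Rightarrow> ('o::linorder \<Rightarrow> 'a set) \<Rightarrow> ('o \<Rightarrow> 'a \<Rightarrow> 'a \<Rightarrow> bool) \<Rightarrow> ('o \<Rightarrow> 'o \<Rightarrow> 'a \<Rightarrow> 'a) \<Rightarrow> 'o \<Rightarrow> bool" where
  "is_chain_colimit (_::'c itself) A le f \<alpha> \<longleftrightarrow>
     (\<forall>\<beta><\<alpha>. cpo_map (A \<beta>) (le \<beta>) (A \<alpha>) (le \<alpha>) (f \<beta> \<alpha>)) \<and>
     (\<forall>\<beta> \<gamma>. \<beta> \<le> \<gamma> \<and> \<gamma> < \<alpha> \<longrightarrow> (\<forall>x\<in>A \<beta>. f \<gamma> \<alpha> (f \<beta> \<gamma> x) = f \<beta> \<alpha> x)) \<and>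
     (\<forall>(C::'c set) s (k::'o \<Rightarrow> 'a \<Rightarrow> 'c).
        is_cpo C s \<and> (\<forall>\<beta><\<alpha>. cpo_map (A \<beta>) (le \<beta>) C s (k \<beta>)) \<and>
        (\<forall>\<beta> \<gamma>. \<beta> \<le> \<gamma> \<and> \<gamma> < \<alpha> \<longrightarrow> (\<forall>x\<in>A \<beta>. k \<gamma> (f \<beta> \<gamma> x) = k \<beta> x)) \<longrightarrow>
        (\<exists>u. cpo_map (A \<alpha>) (le \<alpha>) C s u \<and> (\<forall>\<beta><\<alpha>. \<forall>x\<in>A \<beta>. u (f \<beta> \<alpha> x) = k \<beta> x) \<and>
             (\<forall>u'. cpo_map (A \<alpha>) (le \<alpha>) C s u' \<and> (\<forall>\<beta><\<alpha>. \<forall>x\<in>A \<beta>. u' (f \<beta> \<alpha> x) = k \<beta> x)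
                   \<longrightarrow> (\<forall>y\<in>A \<alpha>. u' y = u y))))"

text \<open>The coproduct \<kappa>\<cdot>3 of \<kappa> = |K| copies of the chain 3 = {0<1<2}: disjoint union with the
  least elements identified.  None is the common bottom; Some (k,i), i \<in> {1,2}, are the
  nonzero elements of the k-th copy.\<close>
definition kappa3 :: "'k set \<Rightarrow> ('k \<times> nat) option set" where
  "kappa3 K = {None} \<union> {Some (k, i) | k i. k \<in> K \<and> i \<in> {1, 2}}"

fun kappa3_le :: "('k \<times> nat) option \<Rightarrow> ('k \<times> nat) option \<Rightarrow> bool" where
  "kappa3_le None _ = True"
| "kappa3_le (Some _) None = False"
| "kappa3_le (Some (k, i)) (Some (k', j)) = (k = k' \<and> i \<le> j)"

definition order_iso :: "'a set \<Rightarrow> ('a \<Rightarrow> 'a \<Rightarrow> bool) \<Rightarrow> 'b set \<Rightarrow> ('b \<Rightarrow> 'b \<Rightarrow> bool) \<Rightarrow> bool" where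
  "order_iso S r T s \<longleftrightarrow> (\<exists>\<phi>. bij_betw \<phi> S T \<and> (\<forall>x\<in>S. \<forall>y\<in>S. r x y \<longleftrightarrow> s (\<phi> x) (\<phi> y)))"

definition is_least_idx :: "'o::wellorder \<Rightarrow> bool" where
  "is_least_idx \<alpha> \<longleftrightarrow> \<not> (\<exists>\<beta>. \<beta> < \<alpha>)"

definition is_succ_idx :: "'o::wellorder \<Rightarrow> 'o \<Rightarrow> bool" where
  "is_succ_idx \<alpha> \<sigma> \<longleftrightarrow> \<alpha> < \<sigma> \<and> \<not> (\<exists>\<gamma>. \<alpha> < \<gamma> \<and> \<gamma> < \<sigma>)"

definition is_limit_idx :: "'o::wellorder \<Rightarrow> bool" where
  "is_limit_idx \<alpha> \<longleftrightarrow> (\<exists>\<beta>. \<beta> < \<alpha>) \<and> (\<forall>\<beta><\<alpha>. \<exists>\<gamma>. \<beta> < \<gamma> \<and> \<gamma> < \<alpha>)"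

end

theory Submission
  imports Defs
begin

text \<open>The map \<open>f\<^sub>0\<^sub>\<alpha>\<close> out of the bottom of the tower is an epimorphism of CPO, by transfinite
  induction: coequalizers are epic and the injections of a colimit are jointly epic.  Testing
  against the chain \<open>2\<close> shows that \<open>y \<in> A\<^sub>\<alpha>\<close> is determined by the set of \<open>x \<in> A\<^sub>0\<close> with
  \<open>f\<^sub>0\<^sub>\<alpha> x \<le> y\<close>, so \<open>|A\<^sub>\<alpha>| \<le> 2^|A\<^sub>0|\<close>, and \<open>|A\<^sub>0| = \<kappa>\<close> for infinite \<open>\<kappa>\<close>.  For finite \<open>\<kappa>\<close>
  every \<open>A\<^sub>\<alpha>\<close> is then finite, and an epimorphism onto a finite cpo is surjective, so
  \<open>|A\<^sub>\<alpha>| \<le> |A\<^sub>0| = 2\<kappa> + 1\<close>.\<close>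

lemma po_refl: "is_po S r \<Longrightarrow> x \<in> S \<Longrightarrow> r x x"
  unfolding is_po_def by blast

lemma po_antisym: "is_po S r \<Longrightarrow> x \<in> S \<Longrightarrow> y \<in> S \<Longrightarrow> r x y \<Longrightarrow> r y x \<Longrightarrow> x = y"
  unfolding is_po_def by blast

lemma po_trans: "is_po S r \<Longrightarrow> x \<in> S \<Longrightarrow> y \<in> S \<Longrightarrow> z \<in> S \<Longrightarrow> r x y \<Longrightarrow> r y z \<Longrightarrow> r x z"
  unfolding is_po_def by blast

lemma cpo_map_mono:
  assumes "is_po S r" "cpo_map S r T s f" "x \<in> S" "y \<in> S" "r x y"
  shows "s (f x) (f y)"
proof -
  have "is_chain S r {x, y}" and "is_join S r {x, y} y"
    using assms po_refl[OF assms(1)] unfolding is_chain_def is_join_def by auto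
  then have "is_join T s (f ` {x, y}) (f y)"
    using assms(2) unfolding cpo_map_def by blast
  then show ?thesis
    unfolding is_join_def by auto
qed

lemma cpo_map_comp:
  assumes po: "is_po S r" and f: "cpo_map S r T s f" and g: "cpo_map T s U t g"
  shows "cpo_map S r U t (\<lambda>x. g (f x))"
  unfolding cpo_map_def
proof (intro conjI allI impI)
  show "(\<lambda>x. g (f x)) ` S \<subseteq> U"
    using f g unfolding cpo_map_def by (simp add: image_subset_iff)
  fix C x assume C: "is_chain S r C" and x: "is_join S r C x"
  have "f ` C \<subseteq> T"
    using C f unfolding is_chain_def cpo_map_def by blast
  moreover have "\<forall>a\<in>C. \<forall>b\<in>C. s (f a) (f b) \<or> s (f b) (f a)"
    using C cpo_map_mono[OF po f] unfolding is_chain_def by blast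
  ultimately have "is_chain T s (f ` C)"
    unfolding is_chain_def by blast
  moreover have "is_join T s (f ` C) (f x)"
    using f C x unfolding cpo_map_def by blast
  ultimately have "is_join U t (g ` f ` C) (g (f x))"
    using g unfolding cpo_map_def by blast
  then show "is_join U t ((\<lambda>x. g (f x)) ` C) (g (f x))"
    by (simp add: image_image)
qed

lemma cpo_map_bot:
  assumes "is_cpo S r" "cpo_map S r T s f"
  obtains b where "b \<in> S" "f b \<in> T" "\<forall>y\<in>T. s (f b) y"
proof -
  obtain b where b: "is_join S r {} b"
    using assms(1) unfolding is_cpo_def is_chain_def by blast
  then have "is_join T s (f ` {}) (f b)"
    using assms(2) unfolding cpo_map_def is_chain_def by blast
  then show thesis
    using that b unfolding is_join_def by auto
qed

lemma finite_chain_has_max: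
  assumes po: "is_po S r" and "finite C" "C \<noteq> {}" "is_chain S r C"
  shows "\<exists>m\<in>C. \<forall>c\<in>C. r c m"
  using assms(2-4)
proof (induction C rule: finite_ne_induct)
  case (singleton x)
  then have "r x x"
    using po_refl[OF po] unfolding is_chain_def by blast
  then show ?case by blast
next
  case (insert x F)
  have "is_chain S r F"
    using insert.prems unfolding is_chain_def by auto
  then obtain m where m: "m \<in> F" "\<forall>c\<in>F. r c m"
    using insert.IH by blast
  have "r x m \<or> r m x"
    using insert.prems m unfolding is_chain_def by auto
  then show ?case
  proof
    assume "r x m"
    then show ?thesis using m by auto
  next
    assume "r m x"
    have "x \<in> S" "F \<subseteq> S"
      using insert.prems unfolding is_chain_def by auto
    have "r c x" if "c \<in> F" for c
      using po_trans[OF po, of c m x] that m \<open>F \<subseteq> S\<close> \<open>x \<in> S\<close> \<open>r m x\<close> by blast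
    then show ?thesis
      using po_refl[OF po \<open>x \<in> S\<close>] by blast
  qed
qed

lemma finite_po_with_bot_is_cpo:
  assumes fin: "finite S" and po: "is_po S r" and bot: "b \<in> S" "\<forall>x\<in>S. r b x"
  shows "is_cpo S r"
  unfolding is_cpo_def
proof (intro conjI allI impI)
  fix C assume C: "is_chain S r C"
  show "\<exists>x. is_join S r C x"
  proof (cases "C = {}")
    case True
    then show ?thesis
      using bot unfolding is_join_def by auto
  next
    case False
    moreover have "finite C"
      using C fin finite_subset unfolding is_chain_def by blast
    ultimately obtain m where "m \<in> C" "\<forall>c\<in>C. r c m"
      using finite_chain_has_max[OF po _ _ C] by blast
    then have "is_join S r C m"
      using C unfolding is_join_def is_chain_def by auto
    then show ?thesis by blast
  qed
qed (fact po)

text \<open>On a finite poset a chain contains its join, so preserving order and the bottom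
  element is enough to preserve all joins of chains.\<close>
lemma finite_cpo_mapI:
  assumes fin: "finite S" and po: "is_po S r" and img: "f ` S \<subseteq> T"
    and mono: "\<And>x y. x \<in> S \<Longrightarrow> y \<in> S \<Longrightarrow> r x y \<Longrightarrow> s (f x) (f y)"
    and bot: "\<And>x t. x \<in> S \<Longrightarrow> \<forall>y\<in>S. r x y \<Longrightarrow> t \<in> T \<Longrightarrow> s (f x) t"
  shows "cpo_map S r T s f"
  unfolding cpo_map_def
proof (intro conjI allI impI)
  fix C x assume C: "is_chain S r C" and x: "is_join S r C x"
  show "is_join T s (f ` C) (f x)"
  proof (cases "C = {}")
    case True
    then show ?thesis
      using x bot img unfolding is_join_def by auto
  next
    case False
    moreover have "finite C"
      using C fin finite_subset unfolding is_chain_def by blast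
    ultimately obtain m where m: "m \<in> C" "\<forall>c\<in>C. r c m"
      using finite_chain_has_max[OF po _ _ C] by blast
    with C x have "x = m"
      using po_antisym[OF po] unfolding is_join_def is_chain_def by blast
    moreover have "m \<in> S"
      using m C unfolding is_chain_def by blast
    ultimately have "\<forall>c\<in>C. s (f c) (f m)"
      using m C mono unfolding is_chain_def by blast
    then show ?thesis
      using \<open>x = m\<close> \<open>m \<in> S\<close> m img unfolding is_join_def by blast
  qed
qed (fact img)

lemma is_cpo_empty_UNIV: "is_cpo {{}, UNIV} (\<subseteq>)"
  by (rule finite_po_with_bot_is_cpo) (auto simp: is_po_def)

lemma cpo_map_not_below:
  assumes po: "is_po S r" and y: "y \<in> S"
  shows "cpo_map S r {{}, UNIV} (\<subseteq>) (\<lambda>w. if r w y then {} else UNIV)"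
  unfolding cpo_map_def
proof (intro conjI allI impI)
  show "(\<lambda>w. if r w y then {} else UNIV) ` S \<subseteq> {{}, UNIV}" by auto
  fix C x assume C: "is_chain S r C" and x: "is_join S r C x"
  show "is_join {{}, UNIV} (\<subseteq>) ((\<lambda>w. if r w y then {} else UNIV) ` C)
      (if r x y then {} else UNIV)"
  proof (cases "r x y")
    case True
    have "x \<in> S" "\<forall>c\<in>C. r c x" "C \<subseteq> S"
      using x C unfolding is_join_def is_chain_def by auto
    then have "\<forall>c\<in>C. r c y"
      using True y po_trans[OF po] by blast
    then show ?thesis
      using True unfolding is_join_def by auto
  next
    case False
    then have "\<exists>c\<in>C. \<not> r c y"
      using x y unfolding is_join_def by blast
    then show ?thesis
      using False unfolding is_join_def by auto
  qed
qed

definition cpo_epi ::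
  "'c itself \<Rightarrow> 'a set \<Rightarrow> 'b set \<Rightarrow> ('b \<Rightarrow> 'b \<Rightarrow> bool) \<Rightarrow> ('a \<Rightarrow> 'b) \<Rightarrow> bool"
  where
  "cpo_epi (_::'c itself) S T s e \<longleftrightarrow>
     (\<forall>(C::'c set) t u u'. is_cpo C t \<and> cpo_map T s C t u \<and> cpo_map T s C t u' \<and>
        (\<forall>x\<in>S. u (e x) = u' (e x)) \<longrightarrow> (\<forall>y\<in>T. u y = u' y))"

lemma cpo_epiI:
  assumes "\<And>(C::'c set) t u u' y. is_cpo C t \<Longrightarrow> cpo_map T s C t u \<Longrightarrow> cpo_map T s C t u' \<Longrightarrow>
             (\<And>x. x \<in> S \<Longrightarrow> u (e x) = u' (e x)) \<Longrightarrow> y \<in> T \<Longrightarrow> u y = u' y"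
  shows "cpo_epi TYPE('c) S T s e"
  using assms unfolding cpo_epi_def by blast

lemma cpo_epiD:
  assumes "cpo_epi TYPE('c) S T s e" "is_cpo (C::'c set) t" "cpo_map T s C t u" "cpo_map T s C t u'"
    "\<And>x. x \<in> S \<Longrightarrow> u (e x) = u' (e x)" "y \<in> T"
  shows "u y = u' y"
  using assms unfolding cpo_epi_def by blast

lemma coequalizer_cpo_epi:
  assumes coeq: "is_coequalizer TYPE('c) A r g h Q q e" and po: "is_po A r"
  shows "cpo_epi TYPE('c) A Q q e"
proof (rule cpo_epiI)
  fix C :: "'c set" and t u u' y
  assume C: "is_cpo C t" and u: "cpo_map Q q C t u" and u': "cpo_map Q q C t u'"
    and agree: "\<And>x. x \<in> A \<Longrightarrow> u (e x) = u' (e x)" and y: "y \<in> Q"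
  have e: "cpo_map A r Q q e" and ge: "\<forall>x. e (g x) = e (h x)"
    and univ: "\<forall>(C::'c set) s k. is_cpo C s \<and> cpo_map A r C s k \<and> (\<forall>x. k (g x) = k (h x)) \<longrightarrow>
        (\<exists>v. cpo_map Q q C s v \<and> (\<forall>a\<in>A. v (e a) = k a) \<and>
             (\<forall>v'. cpo_map Q q C s v' \<and> (\<forall>a\<in>A. v' (e a) = k a) \<longrightarrow> (\<forall>y\<in>Q. v' y = v y)))"
    using coeq unfolding is_coequalizer_def by blast+
  have "\<forall>x. u (e (g x)) = u (e (h x))"
    using ge by simp
  then obtain v where v: "\<forall>v'. cpo_map Q q C t v' \<and> (\<forall>a\<in>A. v' (e a) = u (e a))
      \<longrightarrow> (\<forall>y\<in>Q. v' y = v y)"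
    using univ[rule_format, OF conjI[OF C conjI[OF cpo_map_comp[OF po e u]]]] by blast
  have "u y = v y"
    using v u y by blast
  moreover have "\<forall>a\<in>A. u' (e a) = u (e a)"
    using agree by simp
  then have "u' y = v y"
    using v u' y by blast
  ultimately show "u y = u' y" by simp
qed

lemma chain_colimit_jointly_epi:
  fixes A :: "'o::linorder \<Rightarrow> 'a set"
  assumes col: "is_chain_colimit TYPE('c) A le f \<alpha>"
    and po: "\<And>\<beta>. \<beta> < \<alpha> \<Longrightarrow> is_po (A \<beta>) (le \<beta>)"
    and C: "is_cpo (C::'c set) t"
    and u: "cpo_map (A \<alpha>) (le \<alpha>) C t u" and u': "cpo_map (A \<alpha>) (le \<alpha>) C t u'"
    and agree: "\<And>\<beta> x. \<beta> < \<alpha> \<Longrightarrow> x \<in> A \<beta> \<Longrightarrow> u (f \<beta> \<alpha> x) = u' (f \<beta> \<alpha> x)"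
    and y: "y \<in> A \<alpha>"
  shows "u y = u' y"
proof -
  define k where "k \<beta> x = u (f \<beta> \<alpha> x)" for \<beta> x
  have maps: "\<forall>\<beta><\<alpha>. cpo_map (A \<beta>) (le \<beta>) (A \<alpha>) (le \<alpha>) (f \<beta> \<alpha>)"
    and comp: "\<forall>\<beta> \<gamma>. \<beta> \<le> \<gamma> \<and> \<gamma> < \<alpha> \<longrightarrow> (\<forall>x\<in>A \<beta>. f \<gamma> \<alpha> (f \<beta> \<gamma> x) = f \<beta> \<alpha> x)"
    and univ: "\<forall>(C::'c set) s (k::'o \<Rightarrow> 'a \<Rightarrow> 'c).
        is_cpo C s \<and> (\<forall>\<beta><\<alpha>. cpo_map (A \<beta>) (le \<beta>) C s (k \<beta>)) \<and>
        (\<forall>\<beta> \<gamma>. \<beta> \<le> \<gamma> \<and> \<gamma> < \<alpha> \<longrightarrow> (\<forall>x\<in>A \<beta>. k \<gamma> (f \<beta> \<gamma> x) = k \<beta> x)) \<longrightarrow>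
        (\<exists>v. cpo_map (A \<alpha>) (le \<alpha>) C s v \<and> (\<forall>\<beta><\<alpha>. \<forall>x\<in>A \<beta>. v (f \<beta> \<alpha> x) = k \<beta> x) \<and>
             (\<forall>v'. cpo_map (A \<alpha>) (le \<alpha>) C s v' \<and> (\<forall>\<beta><\<alpha>. \<forall>x\<in>A \<beta>. v' (f \<beta> \<alpha> x) = k \<beta> x)
                   \<longrightarrow> (\<forall>y\<in>A \<alpha>. v' y = v y)))"
    using col unfolding is_chain_colimit_def by blast+
  have k_maps: "\<forall>\<beta><\<alpha>. cpo_map (A \<beta>) (le \<beta>) C t (k \<beta>)"
    using maps cpo_map_comp[OF po _ u] unfolding k_def by blast
  have k_comp: "\<forall>\<beta> \<gamma>. \<beta> \<le> \<gamma> \<and> \<gamma> < \<alpha> \<longrightarrow> (\<forall>x\<in>A \<beta>. k \<gamma> (f \<beta> \<gamma> x) = k \<beta> x)"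
    using comp unfolding k_def by simp
  obtain v where v: "\<forall>v'. cpo_map (A \<alpha>) (le \<alpha>) C t v' \<and>
      (\<forall>\<beta><\<alpha>. \<forall>x\<in>A \<beta>. v' (f \<beta> \<alpha> x) = k \<beta> x) \<longrightarrow> (\<forall>y\<in>A \<alpha>. v' y = v y)"
    using univ[rule_format, OF conjI[OF C conjI[OF k_maps k_comp]]] by blast
  have "u y = v y"
    using v[rule_format, OF conjI[OF u]] y unfolding k_def by simp
  moreover have "u' y = v y"
    using v[rule_format, OF conjI[OF u']] y agree unfolding k_def by simp
  ultimately show "u y = u' y" by simp
qed

lemma exists_least_idx: "\<exists>z::'o::wellorder. is_least_idx z"
proof
  show "is_least_idx (LEAST \<alpha>::'o. True)"
    unfolding is_least_idx_def by (meson Least_le not_le)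
qed

lemma least_idx_le: "is_least_idx z \<Longrightarrow> z \<le> \<alpha>"
  unfolding is_least_idx_def by (meson not_le)

lemma wellorder_idx_cases:
  fixes \<alpha> :: "'o::wellorder"
  obtains (least) "is_least_idx \<alpha>" | (limit) "is_limit_idx \<alpha>" | (succ) \<beta> where "is_succ_idx \<beta> \<alpha>"
  unfolding is_least_idx_def is_limit_idx_def is_succ_idx_def by blast

lemma tower_cpo_epi:
  fixes A :: "'o::wellorder \<Rightarrow> 'a set"
  assumes po: "\<And>\<alpha>. is_po (A \<alpha>) (le \<alpha>)"
    and maps: "\<And>\<alpha> \<beta>. \<alpha> \<le> \<beta> \<Longrightarrow> cpo_map (A \<alpha>) (le \<alpha>) (A \<beta>) (le \<beta>) (f \<alpha> \<beta>)"
    and comp: "\<And>\<alpha> \<beta> \<gamma> x. \<alpha> \<le> \<beta> \<Longrightarrow> \<beta> \<le> \<gamma> \<Longrightarrow> x \<in> A \<alpha> \<Longrightarrow> f \<beta> \<gamma> (f \<alpha> \<beta> x) = f \<alpha> \<gamma> x"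
    and ident: "\<And>\<alpha> x. x \<in> A \<alpha> \<Longrightarrow> f \<alpha> \<alpha> x = x"
    and coequalizers: "\<And>\<alpha> \<sigma>. is_succ_idx \<alpha> \<sigma> \<Longrightarrow>
                 \<exists>g h. is_coequalizer TYPE('c) (A \<alpha>) (le \<alpha>) g h (A \<sigma>) (le \<sigma>) (f \<alpha> \<sigma>)"
    and colimits: "\<And>\<alpha>. is_limit_idx \<alpha> \<Longrightarrow> is_chain_colimit TYPE('c) A le f \<alpha>"
    and z: "is_least_idx z"
  shows "cpo_epi TYPE('c) (A z) (A \<alpha>) (le \<alpha>) (f z \<alpha>)"
proof (induction \<alpha> rule: less_induct)
  case (less \<alpha>)
  note z_le = least_idx_le[OF z]
  show ?case
  proof (rule cpo_epiI)
    fix C :: "'c set" and t u u' y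
    assume C: "is_cpo C t" and u: "cpo_map (A \<alpha>) (le \<alpha>) C t u"
      and u': "cpo_map (A \<alpha>) (le \<alpha>) C t u'"
      and agree: "\<And>x. x \<in> A z \<Longrightarrow> u (f z \<alpha> x) = u' (f z \<alpha> x)" and y: "y \<in> A \<alpha>"
    have below: "u (f \<beta> \<alpha> x) = u' (f \<beta> \<alpha> x)" if "\<beta> < \<alpha>" "x \<in> A \<beta>" for \<beta> x
    proof -
      have "cpo_map (A \<beta>) (le \<beta>) C t (\<lambda>x. u (f \<beta> \<alpha> x))"
        and "cpo_map (A \<beta>) (le \<beta>) C t (\<lambda>x. u' (f \<beta> \<alpha> x))"
        using cpo_map_comp[OF po maps u] cpo_map_comp[OF po maps u'] \<open>\<beta> < \<alpha>\<close> by simp_all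
      moreover have "u (f \<beta> \<alpha> (f z \<beta> x)) = u' (f \<beta> \<alpha> (f z \<beta> x))" if "x \<in> A z" for x
        using agree[OF that] comp[OF z_le[of \<beta>] _ that, of \<alpha>] \<open>\<beta> < \<alpha>\<close> by simp
      ultimately show ?thesis
        using cpo_epiD[OF less.IH[OF \<open>\<beta> < \<alpha>\<close>] C] \<open>x \<in> A \<beta>\<close> by blast
    qed
    show "u y = u' y"
    proof (cases \<alpha> rule: wellorder_idx_cases)
      case least
      then have "\<alpha> = z"
        using z_le[of \<alpha>] unfolding is_least_idx_def by (auto simp: order.order_iff_strict)
      then show ?thesis
        using agree[of y] ident[of y] y by simp
    next
      case limit
      show ?thesis
        by (rule chain_colimit_jointly_epi[OF colimits[OF limit] po C u u' below y])
    next
      case (succ \<beta>)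
      then obtain g h where coeq: "is_coequalizer TYPE('c) (A \<beta>) (le \<beta>) g h (A \<alpha>) (le \<alpha>) (f \<beta> \<alpha>)"
        using coequalizers by blast
      have "\<beta> < \<alpha>"
        using succ unfolding is_succ_idx_def by simp
      show ?thesis
        by (rule cpo_epiD[OF coequalizer_cpo_epi[OF coeq po] C u u' below[OF \<open>\<beta> < \<alpha>\<close>] y])
    qed
  qed
qed

lemma cpo_epi_down_sets_inj:
  assumes epi: "cpo_epi TYPE('d set) S T s e" and po: "is_po T s"
  shows "inj_on (\<lambda>y. {x \<in> S. s (e x) y}) T"
proof (rule inj_onI)
  fix y1 y2
  assume y1: "y1 \<in> T" and y2: "y2 \<in> T" and eq: "{x \<in> S. s (e x) y1} = {x \<in> S. s (e x) y2}"
  have "(if s (e x) y1 then {} else UNIV) = (if s (e x) y2 then {} else (UNIV :: 'd set))"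
    if "x \<in> S" for x
  proof -
    have "s (e x) y1 \<longleftrightarrow> s (e x) y2"
      using eq that by blast
    then show ?thesis by simp
  qed
  then have test: "(if s w y1 then {} else UNIV) = (if s w y2 then {} else (UNIV :: 'd set))"
    if "w \<in> T" for w
    using cpo_epiD[OF epi is_cpo_empty_UNIV cpo_map_not_below[OF po y1] cpo_map_not_below[OF po y2]]
      that by blast
  have "s y1 y2" and "s y2 y1"
    using test[OF y1] test[OF y2] po_refl[OF po y1] po_refl[OF po y2] by (auto split: if_splits)
  then show "y1 = y2"
    using po_antisym[OF po y1 y2] by blast
qed

definition strict_pullback_le :: "('b \<Rightarrow> 'b \<Rightarrow> bool) \<Rightarrow> ('c \<Rightarrow> 'b) \<Rightarrow> 'c \<Rightarrow> 'c \<Rightarrow> bool" where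
  "strict_pullback_le s p X Y \<longleftrightarrow> X = Y \<or> (s (p X) (p Y) \<and> p X \<noteq> p Y)"

lemma is_po_strict_pullback_le:
  assumes po: "is_po T s" and p: "p ` Q \<subseteq> T"
  shows "is_po Q (strict_pullback_le s p)"
  using po_antisym[OF po] po_trans[OF po] p
  unfolding is_po_def strict_pullback_le_def by (smt (verit) image_subset_iff)

lemma strict_pullback_le_section:
  assumes "p (m w1) = w1" "p (m w2) = w2" "s w1 w2"
  shows "strict_pullback_le s p (m w1) (m w2)"
  using assms unfolding strict_pullback_le_def by metis

text \<open>The poset \<open>T\<close> with the non-bottom point \<open>y\<close> doubled: \<open>T\<close> sits inside via \<open>emb\<close>, the
  twin of \<open>y\<close> is \<open>new\<close>, and \<open>dec\<close> collapses the two copies again.\<close>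
locale point_doubling =
  fixes T :: "'b set" and s :: "'b \<Rightarrow> 'b \<Rightarrow> bool" and b y :: 'b and emb :: "'b \<Rightarrow> 'c" and new :: 'c
  assumes po: "is_po T s" and fin: "finite T" and bot: "b \<in> T" "\<forall>w\<in>T. s b w"
    and y: "y \<in> T" "y \<noteq> b" and emb: "inj_on emb T" "new \<notin> emb ` T"
begin

definition carrier :: "'c set" where
  "carrier = insert new (emb ` T)"

definition dec :: "'c \<Rightarrow> 'b" where
  "dec X = (if X = new then y else inv_into T emb X)"

definition doubled_le :: "'c \<Rightarrow> 'c \<Rightarrow> bool" where
  "doubled_le = strict_pullback_le s dec"

definition twin :: "'b \<Rightarrow> 'c" where
  "twin w = (if w = y then new else emb w)"

lemma dec_emb: "w \<in> T \<Longrightarrow> dec (emb w) = w"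
  using emb unfolding dec_def by auto

lemma dec_new: "dec new = y"
  unfolding dec_def by simp

lemma dec_twin: "w \<in> T \<Longrightarrow> dec (twin w) = w"
  using dec_new dec_emb unfolding twin_def by simp

lemma dec_carrier: "dec ` carrier \<subseteq> T"
  using y dec_emb dec_new unfolding carrier_def by auto

lemma doubled_le_bot: "X \<in> carrier \<Longrightarrow> doubled_le (emb b) X"
proof -
  assume X: "X \<in> carrier"
  have "X = emb b" if dec_X: "dec X = b"
    using X unfolding carrier_def
  proof
    assume "X = new"
    then show ?thesis
      using dec_X dec_new y by auto
  next
    assume "X \<in> emb ` T"
    then show ?thesis
      using dec_X dec_emb by auto
  qed
  moreover have "s b (dec X)"
    using bot dec_carrier X by blast
  ultimately show ?thesis
    using dec_emb[OF bot(1)] unfolding doubled_le_def strict_pullback_le_def by auto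
qed

lemma is_cpo: "is_cpo carrier doubled_le"
proof (rule finite_po_with_bot_is_cpo)
  show "finite carrier" "emb b \<in> carrier"
    using fin bot unfolding carrier_def by simp_all
  show "is_po carrier doubled_le"
    unfolding doubled_le_def using is_po_strict_pullback_le[OF po dec_carrier] .
qed (use doubled_le_bot in blast)

lemma section_cpo_map:
  assumes m_carrier: "m ` T \<subseteq> carrier" and m_dec: "\<And>w. w \<in> T \<Longrightarrow> dec (m w) = w"
    and m_bot: "m b = emb b"
  shows "cpo_map T s carrier doubled_le m"
proof (rule finite_cpo_mapI[OF fin po m_carrier])
  show "doubled_le (m w1) (m w2)" if "w1 \<in> T" "w2 \<in> T" "s w1 w2" for w1 w2
    unfolding doubled_le_def by (rule strict_pullback_le_section) (simp_all add: m_dec that)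
  show "doubled_le (m x) X" if "x \<in> T" "\<forall>w\<in>T. s x w" "X \<in> carrier" for x X
  proof -
    have "x = b"
      using that bot po_antisym[OF po] by blast
    then show ?thesis
      using doubled_le_bot m_bot \<open>X \<in> carrier\<close> by simp
  qed
qed

lemma emb_cpo_map: "cpo_map T s carrier doubled_le emb"
  by (rule section_cpo_map) (auto simp: carrier_def dec_emb)

lemma twin_cpo_map: "cpo_map T s carrier doubled_le twin"
proof (rule section_cpo_map)
  show "twin ` T \<subseteq> carrier" "twin b = emb b"
    using y unfolding twin_def carrier_def by auto
qed (fact dec_twin)

end

text \<open>If \<open>y\<close> is not in the image of \<open>e\<close>, then \<open>emb\<close> and \<open>twin\<close> agree on the image of \<open>e\<close>
  but not at \<open>y\<close>.\<close>
lemma finite_cpo_epi_surj: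
  fixes emb :: "'b \<Rightarrow> 'c"
  assumes epi: "cpo_epi TYPE('c) S T s e" and S: "is_cpo S r" and T: "is_cpo T s"
    and fin: "finite T" and e: "cpo_map S r T s e"
    and emb: "inj_on emb T" "new \<notin> emb ` T"
  shows "e ` S = T"
proof
  show "e ` S \<subseteq> T"
    using e unfolding cpo_map_def by blast
  show "T \<subseteq> e ` S"
  proof (rule ccontr)
    assume "\<not> T \<subseteq> e ` S"
    then obtain y where y: "y \<in> T" "y \<notin> e ` S" by blast
    obtain b where b: "b \<in> S" "e b \<in> T" "\<forall>w\<in>T. s (e b) w"
      using cpo_map_bot[OF S e] by blast
    interpret D: point_doubling T s "e b" y emb new
      using T fin b y emb unfolding is_cpo_def by unfold_locales auto
    have "emb y = D.twin y"
      by (rule cpo_epiD[OF epi D.is_cpo D.emb_cpo_map D.twin_cpo_map _ y(1)])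
        (use y in \<open>auto simp: D.twin_def\<close>)
    then show False
      using emb y unfolding D.twin_def by auto
  qed
qed

lemma cpo_epi_card_of_le_Pow:
  includes cardinal_syntax
  assumes "cpo_epi TYPE('d set) S T s e" "is_po T s"
  shows "|T| \<le>o |Pow S|"
proof -
  have "inj_on (\<lambda>y. {x \<in> S. s (e x) y}) T" "(\<lambda>y. {x \<in> S. s (e x) y}) ` T \<subseteq> Pow S"
    using cpo_epi_down_sets_inj[OF assms] by auto
  then show ?thesis
    using card_of_ordLeq by blast
qed

lemma finite_cpo_epi_card_le:
  includes cardinal_syntax
  fixes S :: "'a set" and T :: "'b set"
  assumes epi: "cpo_epi TYPE(('x \<times> 'b) set) S T s e"
    and S: "is_cpo S r" and T: "is_cpo T s" and e: "cpo_map S r T s e" and fin: "finite S"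
  shows "finite T \<and> card T \<le> card S"
proof -
  have "|T| \<le>o |Pow S|"
    using cpo_epi_card_of_le_Pow[OF epi] T unfolding is_cpo_def by blast
  then have "finite T"
    using card_of_ordLeq_finite fin by blast
  moreover have "e ` S = T"
    by (rule finite_cpo_epi_surj[OF epi S T \<open>finite T\<close> e, where emb = "\<lambda>w. {(undefined, w)}"
          and new = "{}"]) (auto simp: inj_on_def)
  ultimately show ?thesis
    using card_image_le[OF fin] by blast
qed

lemma kappa3_eq: "kappa3 K = insert None (Some ` (K \<times> {1, 2}))"
  unfolding kappa3_def by auto

lemma finite_kappa3: "finite K \<Longrightarrow> finite (kappa3 K)"
  by (simp add: kappa3_eq)

lemma card_kappa3: "finite K \<Longrightarrow> card (kappa3 K) = 2 * card K + 1"
  by (simp add: kappa3_eq card_image card_cartesian_product)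

lemma card_of_kappa3_le:
  includes cardinal_syntax
  assumes "infinite K"
  shows "|kappa3 K| \<le>o |K|"
proof -
  obtain k0 where "k0 \<in> K"
    using assms by (metis finite.emptyI ex_in_conv)
  then have "inj_on (case_option (k0, 0) id) (kappa3 K)"
    and "case_option (k0, 0) id ` kappa3 K \<subseteq> K \<times> {0, 1, 2::nat}"
    unfolding kappa3_def inj_on_def by auto
  then have "|kappa3 K| \<le>o |K \<times> {0, 1, 2::nat}|"
    using card_of_ordLeq by blast
  also have "|K \<times> {0, 1, 2::nat}| =o |K|"
  proof -
    have "|{0, 1, 2::nat}| \<le>o |UNIV :: nat set|"
      by (rule card_of_mono1) simp
    then have "|{0, 1, 2::nat}| \<le>o |K|"
      using assms infinite_iff_card_of_nat ordLeq_transitive by blast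
    then show ?thesis
      using card_of_Times_infinite[OF assms, of "{0, 1, 2::nat}"] by blast
  qed
  finally show ?thesis .
qed

lemma card_of_Pow_mono:
  includes cardinal_syntax
  assumes "|S| \<le>o |K|"
  shows "|Pow S| \<le>o |Pow K|"
proof -
  obtain g where "inj_on g S" "g ` S \<subseteq> K"
    using assms card_of_ordLeq by metis
  then have "inj_on (image g) (Pow S)" "image g ` Pow S \<subseteq> Pow K"
    using inj_on_image_Pow image_Pow_mono by blast+
  then show ?thesis
    using card_of_ordLeq by blast
qed

theorem mainTheorem3:
  fixes K :: "'k set"
    and A :: "'o::wellorder \<Rightarrow> 'a set"
    and le :: "'o \<Rightarrow> 'a \<Rightarrow> 'a \<Rightarrow> bool"
    and f :: "'o \<Rightarrow> 'o \<Rightarrow> 'a \<Rightarrow> 'a"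
  assumes cpos: "\<forall>\<alpha>. is_cpo (A \<alpha>) (le \<alpha>)"
    and maps: "\<forall>\<alpha> \<beta>. \<alpha> \<le> \<beta> \<longrightarrow> cpo_map (A \<alpha>) (le \<alpha>) (A \<beta>) (le \<beta>) (f \<alpha> \<beta>)"
    and comp: "\<forall>\<alpha> \<beta> \<gamma>. \<alpha> \<le> \<beta> \<and> \<beta> \<le> \<gamma> \<longrightarrow> (\<forall>x\<in>A \<alpha>. f \<beta> \<gamma> (f \<alpha> \<beta> x) = f \<alpha> \<gamma> x)"
    and ident: "\<forall>\<alpha>. \<forall>x\<in>A \<alpha>. f \<alpha> \<alpha> x = x"
    and base: "\<forall>\<alpha>. is_least_idx \<alpha> \<longrightarrow> order_iso (A \<alpha>) (le \<alpha>) (kappa3 K) kappa3_le"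
    and succ: "\<forall>\<alpha> \<sigma>. is_succ_idx \<alpha> \<sigma> \<longrightarrow>
                 (\<exists>g h. cpo_map two_set two_le (A \<alpha>) (le \<alpha>) g \<and>
                        cpo_map two_set two_le (A \<alpha>) (le \<alpha>) h \<and>
                        is_coequalizer TYPE(('o \<times> 'a) set) (A \<alpha>) (le \<alpha>) g h
                          (A \<sigma>) (le \<sigma>) (f \<alpha> \<sigma>))"
    and limit: "\<forall>\<alpha>. is_limit_idx \<alpha> \<longrightarrow> is_chain_colimit TYPE(('o \<times> 'a) set) A le f \<alpha>"
  shows "\<forall>\<alpha>. (infinite K \<longrightarrow> (\<exists>\<phi>. inj_on \<phi> (A \<alpha>) \<and> \<phi> ` A \<alpha> \<subseteq> Pow K)) \<and>
             (finite K \<longrightarrow> finite (A \<alpha>) \<and> card (A \<alpha>) \<le> 2 * card K + 1)"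
proof -
  include cardinal_syntax
  obtain z :: 'o where z: "is_least_idx z"
    using exists_least_idx by blast
  have po: "\<And>\<alpha>. is_po (A \<alpha>) (le \<alpha>)"
    using cpos unfolding is_cpo_def by blast
  have epi: "cpo_epi TYPE(('o \<times> 'a) set) (A z) (A \<alpha>) (le \<alpha>) (f z \<alpha>)" for \<alpha>
    by (rule tower_cpo_epi[OF po _ _ _ _ _ z]) (use maps comp ident succ limit in blast)+
  obtain \<psi> where \<psi>: "bij_betw \<psi> (A z) (kappa3 K)"
    using base z unfolding order_iso_def by blast
  show ?thesis
  proof (intro allI conjI impI)
    fix \<alpha>
    assume "infinite K"
    have "|A z| \<le>o |K|"
      using \<psi> card_of_ordIso card_of_kappa3_le[OF \<open>infinite K\<close>] ordIso_ordLeq_trans by blast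
    then have "|A \<alpha>| \<le>o |Pow K|"
      using cpo_epi_card_of_le_Pow[OF epi po] card_of_Pow_mono ordLeq_transitive by blast
    then show "\<exists>\<phi>. inj_on \<phi> (A \<alpha>) \<and> \<phi> ` A \<alpha> \<subseteq> Pow K"
      using card_of_ordLeq by blast
  next
    fix \<alpha>
    assume "finite K"
    have "finite (A z)" "card (A z) = 2 * card K + 1"
      using \<psi> finite_kappa3[OF \<open>finite K\<close>] card_kappa3[OF \<open>finite K\<close>]
      by (simp_all add: bij_betw_finite bij_betw_same_card)
    moreover have "finite (A \<alpha>) \<and> card (A \<alpha>) \<le> card (A z)"
      using finite_cpo_epi_card_le[OF epi cpos[rule_format] cpos[rule_format]
          maps[rule_format, OF least_idx_le[OF z]] \<open>finite (A z)\<close>] .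
    ultimately show "finite (A \<alpha>)" "card (A \<alpha>) \<le> 2 * card K + 1"
      by simp_all
  qed
qed

end
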